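(* Let $f_1,f_2,\dots$ be real-valued measurable functions on a probability space $(\Omega,\mathcal F,\mathbb P)$ with tail $\sigma$-algebra $\mathcal T=\bigcap_n\sigma(f_n,f_{n+1},\dots)$. Suppose there are a subsequence $(f_{k_n})_n$ and real-valued $\mathcal T$-measurable $D_1,D_2,\dots$ such that, along $(f_{k_n})_n$ and along every further subsequence $(f_{m_n})_n$ of it, $\frac1N\sum_{n=1}^Nf_{m_n}-D_N\to0$ in $\mathbb P$-probability as $N\to\infty$. Then, passing to a further subsequence, $(f_{k_n})_n$ may be assumed bounded in probability, i.e. $\lim_{M\to\infty}\sup_n\mathbb P(|f_{k_n}|>M)=0$. *)

theory Defs
  imports "HOL-Probability.Probability"
begin

definition tail_sigma :: "'a measure \<Rightarrow> (nat \<Rightarrow> 'a \<Rightarrow> real) \<Rightarrow> 'a set set" where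
  "tail_sigma M f = (\<Inter>n. sigma_sets (space M)
      (\<Union>i\<in>{n..}. {f i -` B \<inter> space M | B. B \<in> sets borel}))"

definition tendsto_zero_in_prob :: "'a measure \<Rightarrow> (nat \<Rightarrow> 'a \<Rightarrow> real) \<Rightarrow> bool" where
  "tendsto_zero_in_prob M X \<longleftrightarrow>
     (\<forall>e>0. (\<lambda>N. measure M {\<omega> \<in> space M. e < \<bar>X N \<omega>\<bar>}) \<longlonglongrightarrow> 0)"

end

theory Submission
  imports Defs
begin

(* The averages along a subsequence s and along its shift n \<mapsto> s (n + 1) approximate the same
   D N, so their difference (f (k (s N)) - f (k (s 0))) / N tends to 0 in probability; hence
   f (k (s N)) / N tends to 0 in probability along every subsequence s.  This already makes the
   whole sequence f (k n) bounded in probability, so the subsequence r can be taken to be the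
   identity: otherwise there would be an e > 0 and, since finitely many random variables are
   always tight, a subsequence s with P(|f (k (s j))| > j) > e for every j, contradicting
   f (k (s N)) / N \<longrightarrow> 0.  Tail measurability of D is only used to know that D is measurable. *)

definition bounded_in_prob :: "'a measure \<Rightarrow> (nat \<Rightarrow> 'a \<Rightarrow> real) \<Rightarrow> bool" where
  "bounded_in_prob M X \<longleftrightarrow>
     ((\<lambda>C::real. SUP n. measure M {\<omega> \<in> space M. C < \<bar>X n \<omega>\<bar>}) \<longlongrightarrow> 0) at_top"

lemma tail_sigma_subset_sets:
  assumes "\<And>i. f i \<in> borel_measurable M"
  shows "tail_sigma M f \<subseteq> sets M"
proof -
  have "tail_sigma M f \<subseteq> sigma_sets (space M) (\<Union>i\<in>{0..}. {f i -` B \<inter> space M | B. B \<in> sets borel})"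
    unfolding tail_sigma_def by blast
  also have "\<dots> \<subseteq> sets M"
    by (rule sets.sigma_sets_subset) (use assms in \<open>auto simp: measurable_sets\<close>)
  finally show ?thesis .
qed

lemma borel_measurable_tail_sigma_imp_borel_measurable:
  assumes "\<And>i. f i \<in> borel_measurable M"
    and "D \<in> borel_measurable (sigma (space M) (tail_sigma M f))"
  shows "D \<in> borel_measurable M"
proof -
  have T: "tail_sigma M f \<subseteq> sets M"
    using assms(1) by (rule tail_sigma_subset_sets)
  then have "sets (sigma (space M) (tail_sigma M f)) = sigma_sets (space M) (tail_sigma M f)"
    using sets.sets_into_space by (intro sets_measure_of) blast
  with sets.sigma_sets_subset[OF T] have "sets (sigma (space M) (tail_sigma M f)) \<subseteq> sets M"
    by simp
  then have "borel_measurable (sigma (space M) (tail_sigma M f)) \<subseteq> borel_measurable M"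
    by (intro measurable_mono) (simp_all add: space_measure_of_conv)
  with assms(2) show ?thesis
    by blast
qed

lemma strict_mono_choice:
  assumes "\<And>j m. \<exists>n>m. Q j n"
  shows "\<exists>s::nat \<Rightarrow> nat. strict_mono s \<and> (\<forall>j. Q j (s j))"
proof -
  define s where "s = rec_nat (SOME n. Q 0 n) (\<lambda>j sj. SOME n. n > sj \<and> Q (Suc j) n)"
  have s0: "Q 0 (s 0)"
    unfolding s_def using someI_ex[of "Q 0"] assms[of 0 0] by auto
  have sSuc: "s j < s (Suc j) \<and> Q (Suc j) (s (Suc j))" for j
  proof -
    have "s (Suc j) = (SOME n. s j < n \<and> Q (Suc j) n)"
      by (simp add: s_def)
    with someI_ex[of "\<lambda>n. s j < n \<and> Q (Suc j) n"] assms[where j="Suc j" and m="s j"] show ?thesis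
      by auto
  qed
  have "strict_mono s"
    using sSuc by (simp add: strict_mono_Suc_iff)
  moreover have "Q j (s j)" for j
    using s0 sSuc by (cases j) auto
  ultimately show ?thesis by blast
qed

lemma tendsto_zero_in_probD:
  "tendsto_zero_in_prob M X \<Longrightarrow> 0 < e \<Longrightarrow>
    (\<lambda>N. measure M {\<omega> \<in> space M. e < \<bar>X N \<omega>\<bar>}) \<longlonglongrightarrow> 0"
  by (simp add: tendsto_zero_in_prob_def)

lemma tendsto_zero_in_prob_uminus:
  "tendsto_zero_in_prob M (\<lambda>N \<omega>. - X N \<omega>) \<longleftrightarrow> tendsto_zero_in_prob M X"
  by (simp add: tendsto_zero_in_prob_def)

context prob_space
begin

lemma tendsto_prob_abs_gt_at_top:
  fixes h :: "'a \<Rightarrow> real"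
  assumes "h \<in> borel_measurable M"
  shows "((\<lambda>C. prob {\<omega> \<in> space M. C < \<bar>h \<omega>\<bar>}) \<longlongrightarrow> 0) at_top"
proof -
  let ?\<mu> = "distr M borel (\<lambda>\<omega>. \<bar>h \<omega>\<bar>)"
  have habs: "(\<lambda>\<omega>. \<bar>h \<omega>\<bar>) \<in> borel_measurable M"
    using assms by measurable
  interpret \<mu>: real_distribution ?\<mu>
    using habs by (rule real_distribution_distr)
  have "prob {\<omega> \<in> space M. C < \<bar>h \<omega>\<bar>} = 1 - cdf ?\<mu> C" for C
  proof -
    have "cdf ?\<mu> C = prob {\<omega> \<in> space M. \<bar>h \<omega>\<bar> \<le> C}"
      using habs by (simp add: cdf_def measure_distr vimage_def Int_def conj_commute)
    moreover have "{\<omega> \<in> space M. C < \<bar>h \<omega>\<bar>} = space M - {\<omega> \<in> space M. \<bar>h \<omega>\<bar> \<le> C}"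
      by auto
    moreover have "{\<omega> \<in> space M. \<bar>h \<omega>\<bar> \<le> C} \<in> events"
      using habs by measurable
    ultimately show ?thesis
      by (simp add: prob_compl)
  qed
  moreover have "((\<lambda>C. 1 - cdf ?\<mu> C) \<longlongrightarrow> 1 - 1) at_top"
    by (intro tendsto_diff tendsto_const \<mu>.cdf_lim_at_top_prob)
  ultimately show ?thesis
    by simp
qed

lemma tendsto_zero_in_prob_add:
  assumes [measurable]: "\<And>N. X N \<in> borel_measurable M" "\<And>N. Y N \<in> borel_measurable M"
    and "tendsto_zero_in_prob M X" "tendsto_zero_in_prob M Y"
  shows "tendsto_zero_in_prob M (\<lambda>N \<omega>. X N \<omega> + Y N \<omega>)"
  unfolding tendsto_zero_in_prob_def
proof (intro allI impI)
  fix e :: real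
  assume "0 < e"
  let ?A = "\<lambda>X N. {\<omega> \<in> space M. e / 2 < \<bar>X N \<omega>\<bar>}"
  have bound: "prob {\<omega> \<in> space M. e < \<bar>X N \<omega> + Y N \<omega>\<bar>} \<le> prob (?A X N) + prob (?A Y N)"
    for N
  proof -
    have "e / 2 < \<bar>a\<bar> \<or> e / 2 < \<bar>b\<bar>" if "e < \<bar>a + b\<bar>" for a b :: real
      using that abs_triangle_ineq[of a b] by linarith
    then have "{\<omega> \<in> space M. e < \<bar>X N \<omega> + Y N \<omega>\<bar>} \<subseteq> ?A X N \<union> ?A Y N"
      by blast
    then have "prob {\<omega> \<in> space M. e < \<bar>X N \<omega> + Y N \<omega>\<bar>} \<le> prob (?A X N \<union> ?A Y N)"
      by (rule finite_measure_mono) measurable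
    also have "\<dots> \<le> prob (?A X N) + prob (?A Y N)"
      by (rule measure_Un_le) measurable
    finally show ?thesis .
  qed
  have "0 < e / 2"
    using \<open>0 < e\<close> by simp
  then have lim: "(\<lambda>N. prob (?A X N) + prob (?A Y N)) \<longlonglongrightarrow> 0"
    using tendsto_add[OF tendsto_zero_in_probD[OF assms(3)] tendsto_zero_in_probD[OF assms(4)]]
    by (simp only: add_0_right)
  show "(\<lambda>N. prob {\<omega> \<in> space M. e < \<bar>X N \<omega> + Y N \<omega>\<bar>}) \<longlonglongrightarrow> 0"
    by (rule tendsto_sandwich[OF always_eventually always_eventually tendsto_const lim])
      (blast intro: measure_nonneg bound)+
qed

lemma tendsto_zero_in_prob_divide_real:
  assumes "h \<in> borel_measurable M"
  shows "tendsto_zero_in_prob M (\<lambda>N \<omega>. h \<omega> / real N)"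
  unfolding tendsto_zero_in_prob_def
proof (intro allI impI)
  fix e :: real
  assume "0 < e"
  have "filterlim (\<lambda>N. e * real N) at_top sequentially"
    using \<open>0 < e\<close> by (rule filterlim_tendsto_pos_mult_at_top[OF tendsto_const _ filterlim_real_sequentially])
  from filterlim_compose[OF tendsto_prob_abs_gt_at_top[OF assms] this]
  have "(\<lambda>N. prob {\<omega> \<in> space M. e * real N < \<bar>h \<omega>\<bar>}) \<longlonglongrightarrow> 0" .
  moreover have "eventually (\<lambda>N. prob {\<omega> \<in> space M. e * real N < \<bar>h \<omega>\<bar>}
      = prob {\<omega> \<in> space M. e < \<bar>h \<omega> / real N\<bar>}) sequentially"
    using eventually_gt_at_top[of 0]
    by eventually_elim (simp add: abs_divide pos_less_divide_eq)
  ultimately show "(\<lambda>N. prob {\<omega> \<in> space M. e < \<bar>h \<omega> / real N\<bar>}) \<longlonglongrightarrow> 0"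
    by (rule Lim_transform_eventually)
qed

lemma tendsto_zero_in_prob_divide_of_averages:
  fixes x D :: "nat \<Rightarrow> 'a \<Rightarrow> real"
  assumes [measurable]: "\<And>n. x n \<in> borel_measurable M" "\<And>N. D N \<in> borel_measurable M"
    and avg: "tendsto_zero_in_prob M (\<lambda>N \<omega>. (\<Sum>n<N. x n \<omega>) / real N - D N \<omega>)"
    and avg_shift: "tendsto_zero_in_prob M (\<lambda>N \<omega>. (\<Sum>n<N. x (Suc n) \<omega>) / real N - D N \<omega>)"
  shows "tendsto_zero_in_prob M (\<lambda>N \<omega>. x N \<omega> / real N)"
proof -
  have eq: "(\<lambda>N \<omega>. x N \<omega> / real N) = (\<lambda>N \<omega>.
      ((\<Sum>n<N. x (Suc n) \<omega>) / real N - D N \<omega>) + - ((\<Sum>n<N. x n \<omega>) / real N - D N \<omega>)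
      + x 0 \<omega> / real N)"
  proof (intro ext)
    \<comment> \<open>also valid for N = 0, where every term is divided by 0\<close>
    fix N \<omega>
    have "(\<Sum>n<N. x (Suc n) \<omega>) - (\<Sum>n<N. x n \<omega>) = x N \<omega> - x 0 \<omega>"
      using sum_lessThan_telescope[of "\<lambda>n. x n \<omega>" N] by (simp add: sum_subtractf)
    then show "x N \<omega> / real N = ((\<Sum>n<N. x (Suc n) \<omega>) / real N - D N \<omega>)
        + - ((\<Sum>n<N. x n \<omega>) / real N - D N \<omega>) + x 0 \<omega> / real N"
      by (simp add: diff_divide_distrib[symmetric] add_divide_distrib[symmetric])
  qed
  have avg_neg: "tendsto_zero_in_prob M (\<lambda>N \<omega>. - ((\<Sum>n<N. x n \<omega>) / real N - D N \<omega>))"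
    using avg by (simp only: tendsto_zero_in_prob_uminus)
  have first: "tendsto_zero_in_prob M (\<lambda>N \<omega>. x 0 \<omega> / real N)"
    by (rule tendsto_zero_in_prob_divide_real) measurable
  show ?thesis
    unfolding eq by (intro tendsto_zero_in_prob_add avg_shift avg_neg first; measurable)
qed

lemma bounded_in_probI:
  assumes [measurable]: "\<And>n. X n \<in> borel_measurable M"
    and small: "\<And>e. 0 < e \<Longrightarrow> \<exists>C. \<forall>n. prob {\<omega> \<in> space M. C < \<bar>X n \<omega>\<bar>} \<le> e"
  shows "bounded_in_prob M X"
  unfolding bounded_in_prob_def
proof (rule tendstoI)
  fix e :: real
  assume "0 < e"
  then obtain C where C: "\<And>n. prob {\<omega> \<in> space M. C < \<bar>X n \<omega>\<bar>} \<le> e / 2"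
    using small[of "e / 2"] by auto
  show "eventually (\<lambda>C'. dist (SUP n. prob {\<omega> \<in> space M. C' < \<bar>X n \<omega>\<bar>}) 0 < e) at_top"
    using eventually_ge_at_top[of C]
  proof eventually_elim
    fix C'
    assume "C \<le> C'"
    have "prob {\<omega> \<in> space M. C' < \<bar>X n \<omega>\<bar>} \<le> prob {\<omega> \<in> space M. C < \<bar>X n \<omega>\<bar>}" for n
      using \<open>C \<le> C'\<close> by (intro finite_measure_mono) auto
    then have "prob {\<omega> \<in> space M. C' < \<bar>X n \<omega>\<bar>} \<le> e / 2" for n
      using C[of n] by (rule order_trans)
    then have "(SUP n. prob {\<omega> \<in> space M. C' < \<bar>X n \<omega>\<bar>}) \<le> e / 2"
      by (intro cSUP_least) auto
    moreover have "0 \<le> (SUP n. prob {\<omega> \<in> space M. C' < \<bar>X n \<omega>\<bar>})"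
      by (rule cSUP_upper2[of _ _ 0]) (auto intro: bdd_aboveI[where M=1])
    ultimately show "dist (SUP n. prob {\<omega> \<in> space M. C' < \<bar>X n \<omega>\<bar>}) 0 < e"
      using \<open>0 < e\<close> by simp
  qed
qed

lemma exists_subseq_prob_abs_gt_index:
  fixes X :: "nat \<Rightarrow> 'a \<Rightarrow> real"
  assumes [measurable]: "\<And>n. X n \<in> borel_measurable M"
    and "0 < e" and exceeds: "\<And>C. \<exists>n. e < prob {\<omega> \<in> space M. C < \<bar>X n \<omega>\<bar>}"
  shows "\<exists>s. strict_mono s \<and> (\<forall>j. e < prob {\<omega> \<in> space M. real j < \<bar>X (s j) \<omega>\<bar>})"
proof (rule strict_mono_choice[where Q = "\<lambda>j n. e < prob {\<omega> \<in> space M. real j < \<bar>X n \<omega>\<bar>}"])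
  fix j m :: nat
  have "eventually (\<lambda>C. \<forall>i\<in>{..m}. prob {\<omega> \<in> space M. C < \<bar>X i \<omega>\<bar>} < e) at_top"
    using order_tendstoD(2)[OF tendsto_prob_abs_gt_at_top \<open>0 < e\<close>]
    by (intro eventually_ball_finite) auto
  then obtain C where C: "real j \<le> C" "\<And>i. i \<le> m \<Longrightarrow> prob {\<omega> \<in> space M. C < \<bar>X i \<omega>\<bar>} < e"
    using eventually_ge_at_top[of "real j"] unfolding eventually_at_top_linorder
    by (metis atMost_iff nle_le)
  obtain n where n: "e < prob {\<omega> \<in> space M. C < \<bar>X n \<omega>\<bar>}"
    using exceeds by blast
  have "prob {\<omega> \<in> space M. C < \<bar>X n \<omega>\<bar>} \<le> prob {\<omega> \<in> space M. real j < \<bar>X n \<omega>\<bar>}"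
    using C(1) by (intro finite_measure_mono) auto
  moreover have "m < n"
    using C(2)[of n] n by (meson leI less_asym)
  ultimately show "\<exists>n>m. e < prob {\<omega> \<in> space M. real j < \<bar>X n \<omega>\<bar>}"
    using n by (intro exI[of _ n]) auto
qed

lemma bounded_in_prob_if_subseq_divide_tendsto_zero:
  assumes [measurable]: "\<And>n. X n \<in> borel_measurable M"
    and lim: "\<And>s. strict_mono s \<Longrightarrow> tendsto_zero_in_prob M (\<lambda>N \<omega>. X (s N) \<omega> / real N)"
  shows "bounded_in_prob M X"
proof (rule bounded_in_probI[OF assms(1)], rule ccontr)
  fix e :: real
  assume "0 < e" and "\<nexists>C. \<forall>n. prob {\<omega> \<in> space M. C < \<bar>X n \<omega>\<bar>} \<le> e"
  then have "\<exists>n. e < prob {\<omega> \<in> space M. C < \<bar>X n \<omega>\<bar>}" for C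
    by (auto simp: not_le)
  with \<open>0 < e\<close> obtain s where s: "strict_mono s"
    and exceeds_s: "\<And>j. e < prob {\<omega> \<in> space M. real j < \<bar>X (s j) \<omega>\<bar>}"
    using exists_subseq_prob_abs_gt_index[of X e] assms(1) by blast
  have "eventually (\<lambda>N. prob {\<omega> \<in> space M. 1 < \<bar>X (s N) \<omega> / real N\<bar>} < e) sequentially"
    using order_tendstoD(2)[OF tendsto_zero_in_probD[OF lim[OF s] zero_less_one] \<open>0 < e\<close>] .
  moreover have "eventually (\<lambda>N. prob {\<omega> \<in> space M. 1 < \<bar>X (s N) \<omega> / real N\<bar>}
      = prob {\<omega> \<in> space M. real N < \<bar>X (s N) \<omega>\<bar>}) sequentially"
    using eventually_gt_at_top[of 0]
    by eventually_elim (simp add: abs_divide pos_less_divide_eq)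
  ultimately have "eventually (\<lambda>N. prob {\<omega> \<in> space M. real N < \<bar>X (s N) \<omega>\<bar>} < e) sequentially"
    by eventually_elim simp
  then obtain N where "prob {\<omega> \<in> space M. real N < \<bar>X (s N) \<omega>\<bar>} < e"
    by (auto simp: eventually_sequentially)
  with exceeds_s[of N] show False
    by linarith
qed

end

theorem lemma5p1:
  fixes M :: "'a measure" and f D :: "nat \<Rightarrow> 'a \<Rightarrow> real" and k :: "nat \<Rightarrow> nat"
  assumes "prob_space M"
    and "\<And>i. f i \<in> borel_measurable M"
    and "strict_mono k"
    and "\<And>N. D N \<in> borel_measurable (sigma (space M) (tail_sigma M f))"
    and "\<And>r. strict_mono r \<Longrightarrow>
           tendsto_zero_in_prob M (\<lambda>N \<omega>. (\<Sum>n<N. f (k (r n)) \<omega>) / real N - D N \<omega>)"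
  shows "\<exists>r::nat \<Rightarrow> nat. strict_mono r \<and>
           ((\<lambda>C::real. SUP n. measure M {\<omega> \<in> space M. C < \<bar>f (k (r n)) \<omega>\<bar>}) \<longlongrightarrow> 0) at_top"
proof -
  interpret prob_space M by fact
  have D_measurable: "D N \<in> borel_measurable M" for N
    using assms(2,4) by (rule borel_measurable_tail_sigma_imp_borel_measurable)
  have "bounded_in_prob M (\<lambda>n. f (k n))"
  proof (rule bounded_in_prob_if_subseq_divide_tendsto_zero)
    fix s :: "nat \<Rightarrow> nat"
    assume s: "strict_mono s"
    then have "strict_mono (\<lambda>n. s (Suc n))"
      by (simp add: strict_mono_Suc_iff)
    with s show "tendsto_zero_in_prob M (\<lambda>N \<omega>. f (k (s N)) \<omega> / real N)"
      by (intro tendsto_zero_in_prob_divide_of_averages[where D = D] assms(2,5) D_measurable)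
  qed (rule assms(2))
  then show ?thesis
    unfolding bounded_in_prob_def by (intro exI[of _ id]) (simp add: strict_mono_def)
qed

end
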